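(* Let $\sigma$ be a density operator on a finite-dimensional Hilbert space with largest eigenvalue $p_{\max}=\|\sigma\|_\infty<1$ and corresponding eigenvector $|\Phi\rangle$, and let $H$ be Hermitian. Then $$P_H(\sigma)\ge V_H(\Phi)\Big(\frac{p_{\max}^2}{1-p_{\max}}-1\Big).$$
   Context: $V_H(\Phi)=\langle\Phi|H^2|\Phi\rangle-\langle\Phi|H|\Phi\rangle^2$. Purity of coherence: $P_H(\sigma)=\mathrm{Tr}(H\sigma^2H\sigma^{-1})-\mathrm{Tr}(\sigma H^2)$ ($\sigma^{-1}$ inverse on the support) if $\mathrm{supp}(H\sigma H)\subseteq\mathrm{supp}(\sigma)$, else $\infty$. *)

theory Defs
  imports "HOL-Analysis.Analysis"
begin

definition adjoint :: "complex^'n^'m \<Rightarrow> complex^'m^'n" where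
  "adjoint A = (\<chi> i j. cnj (A $ j $ i))"

definition hermitian :: "complex^'n^'n \<Rightarrow> bool" where
  "hermitian A \<longleftrightarrow> adjoint A = A"

definition mtrace :: "complex^'n^'n \<Rightarrow> complex" where
  "mtrace A = (\<Sum>i\<in>UNIV. A $ i $ i)"

text \<open>Sesquilinear inner product, linear in the second argument: braket x y = <x|y>.\<close>
definition braket :: "complex^'n \<Rightarrow> complex^'n \<Rightarrow> complex" where
  "braket x y = (\<Sum>i\<in>UNIV. cnj (x $ i) * y $ i)"

definition positive_semidef :: "complex^'n^'n \<Rightarrow> bool" where
  "positive_semidef A \<longleftrightarrow> hermitian A \<and> (\<forall>x. Im (braket x (A *v x)) = 0 \<and> Re (braket x (A *v x)) \<ge> 0)"

definition density_operator :: "complex^'n^'n \<Rightarrow> bool" where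
  "density_operator \<sigma> \<longleftrightarrow> positive_semidef \<sigma> \<and> mtrace \<sigma> = 1"

definition supp :: "complex^'n^'m \<Rightarrow> (complex^'m) set" where
  "supp A = range (\<lambda>x. A *v x)"

text \<open>Moore--Penrose pseudo-inverse; for Hermitian \<sigma> this is the inverse on the support.\<close>
definition pinv :: "complex^'n^'n \<Rightarrow> complex^'n^'n" where
  "pinv A = (THE X. A ** X ** A = A \<and> X ** A ** X = X \<and>
                    adjoint (A ** X) = A ** X \<and> adjoint (X ** A) = X ** A)"

text \<open>Variance of H in the pure state \<Phi> (normalised vector).\<close>
definition variance :: "complex^'n^'n \<Rightarrow> complex^'n \<Rightarrow> real" where
  "variance H \<Phi> = Re (braket \<Phi> ((H ** H) *v \<Phi>)) - (Re (braket \<Phi> (H *v \<Phi>)))\<^sup>2"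

text \<open>Purity of coherence; the trace expression is real for Hermitian H and density \<sigma>.\<close>
definition purity_coh :: "complex^'n^'n \<Rightarrow> complex^'n^'n \<Rightarrow> ereal" where
  "purity_coh H \<sigma> =
     (if supp (H ** \<sigma> ** H) \<subseteq> supp \<sigma>
      then ereal (Re (mtrace (H ** \<sigma> ** \<sigma> ** H ** pinv \<sigma>) - mtrace (\<sigma> ** H ** H)))
      else \<infinity>)"

end

theory Submission
  imports Defs
begin

text \<open>
  Let K = H\<sigma> - \<sigma>H. Under the support condition, H\<sigma> = \<sigma>Y with Y = \<sigma>^+H\<sigma>, and completing
  the square in the positive form (B, D) \<mapsto> tr(B^* \<sigma> D) gives the variational bound
  P_H(\<sigma>) \<ge> 2 Re tr(C^* K) - tr(C^* \<sigma> C) for every matrix C.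

  Put v = (H - \<langle>H\<rangle>)\<Phi>, so that V_H(\<Phi>) = |v|^2, and w = K\<Phi> = (p - \<sigma>)v, which is
  orthogonal to \<Phi>. On the orthogonal complement of \<Phi> the form of \<sigma> is at most 1 - p
  (because tr \<sigma> = 1), so the test matrix C = b|w\<rangle>\<langle>\<Phi>| - a|\<Phi>\<rangle>\<langle>w| with a = 1/p and
  b = 1/(1 - p) yields P_H(\<sigma>) \<ge> (1/p + 1/(1 - p)) |w|^2, while |w| \<ge> (2p - 1)|v| by
  Cauchy--Schwarz. The claim then reduces to p(p^2 + p - 1) \<le> (2p - 1)^2, whose difference is
  (1 - p)^3; when p^2 \<le> 1 - p the bound is not positive and holds trivially.

  The pseudo-inverse of a Hermitian matrix A exists because A = A^2 q(A) for a real
  polynomial q, obtained from a linear dependence among the powers of A.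
\<close>

section \<open>Adjoints, traces and the inner product\<close>

lemma adjoint_nth [simp]: "adjoint A $ i $ j = cnj (A $ j $ i)"
  by (simp add: adjoint_def)

lemma adjoint_adjoint [simp]: "adjoint (adjoint A) = A"
  by (simp add: vec_eq_iff)

lemma adjoint_mat1 [simp]: "adjoint (mat 1 :: complex^'n^'n) = mat 1"
  by (simp add: vec_eq_iff mat_def)

lemma adjoint_zero [simp]: "adjoint (0 :: complex^'n^'m) = 0"
  by (simp add: vec_eq_iff)

lemma adjoint_matrix_mult: "adjoint (A ** B) = adjoint B ** adjoint A"
  by (simp add: vec_eq_iff matrix_matrix_mult_def mult.commute)

lemma adjoint_add: "adjoint (A + B) = adjoint A + adjoint B"
  by (simp add: vec_eq_iff)

lemma adjoint_diff: "adjoint (A - B) = adjoint A - adjoint B"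
  by (simp add: vec_eq_iff)

lemma adjoint_scaleR: "adjoint (r *\<^sub>R A) = r *\<^sub>R adjoint A"
  by (simp add: vec_eq_iff)

lemma adjoint_sum: "adjoint (sum f S) = (\<Sum>i\<in>S. adjoint (f i))"
  by (induct S rule: infinite_finite_induct) (simp_all add: adjoint_add)

lemma hermitian_mat1: "hermitian (mat 1 :: complex^'n^'n)"
  by (simp add: hermitian_def)

lemma matrix_diff_ldistrib: "(A :: complex^'n^'m) ** (B - C) = A ** B - A ** C"
  by (simp add: vec_eq_iff matrix_matrix_mult_def sum_subtractf right_diff_distrib)

lemma matrix_diff_rdistrib: "((A :: complex^'n^'m) - B) ** C = A ** C - B ** C"
  by (simp add: vec_eq_iff matrix_matrix_mult_def sum_subtractf left_diff_distrib)

lemma matrix_add_rdistrib: "((A :: complex^'n^'m) + B) ** C = A ** C + B ** C"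
  by (simp add: vec_eq_iff matrix_matrix_mult_def sum.distrib distrib_right)

lemma matrix_neg_right: "(A :: complex^'n^'m) ** (- B) = - (A ** B)"
  by (simp add: vec_eq_iff matrix_matrix_mult_def sum_negf)

lemma matrix_mult_sum_left: "(A :: complex^'n^'m) ** sum f S = (\<Sum>i\<in>S. A ** f i)"
  by (induct S rule: infinite_finite_induct) (simp_all add: matrix_add_ldistrib)

lemma matrix_mult_sum_right: "sum f S ** (A :: complex^'n^'m) = (\<Sum>i\<in>S. f i ** A)"
  by (induct S rule: infinite_finite_induct) (simp_all add: matrix_add_rdistrib)

lemma matrix_vector_smult: "(A :: complex^'n^'m) *v (c *s x) = c *s (A *v x)"
  by (simp add: vec_eq_iff matrix_vector_mult_def sum_distrib_left mult.left_commute)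

lemma scaleR_matrix_vector: "(r *\<^sub>R (A :: complex^'n^'m)) *v x = r *\<^sub>R (A *v x)"
  by (simp add: vec_eq_iff matrix_vector_mult_def scaleR_sum_right)

lemma scaleR_eq_of_real_smult: "r *\<^sub>R (y :: complex^'n) = complex_of_real r *s y"
  by (simp add: vec_eq_iff complex_eq_iff)

lemma braket_adjoint: "braket x (A *v y) = braket (adjoint A *v x) y"
proof -
  have "braket x (A *v y) = (\<Sum>i\<in>UNIV. \<Sum>j\<in>UNIV. cnj (x$i) * A$i$j * y$j)"
    unfolding braket_def matrix_vector_mult_def by (simp add: sum_distrib_left mult.assoc)
  also have "\<dots> = (\<Sum>j\<in>UNIV. \<Sum>i\<in>UNIV. cnj (x$i) * A$i$j * y$j)"
    by (rule sum.swap)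
  also have "\<dots> = braket (adjoint A *v x) y"
    unfolding braket_def matrix_vector_mult_def by (simp add: sum_distrib_left mult_ac)
  finally show ?thesis .
qed

lemma braket_add_right: "braket x (y + z) = braket x y + braket x z"
  by (simp add: braket_def sum.distrib distrib_left)

lemma braket_add_left: "braket (x + y) z = braket x z + braket y z"
  by (simp add: braket_def sum.distrib distrib_right)

lemma braket_diff_right: "braket x (y - z) = braket x y - braket x z"
  by (simp add: braket_def sum_subtractf right_diff_distrib)

lemma braket_diff_left: "braket (x - y) z = braket x z - braket y z"
  by (simp add: braket_def sum_subtractf left_diff_distrib)

lemma braket_neg_right: "braket x (- y) = - braket x y"
  by (simp add: braket_def sum_negf)

lemma braket_neg_left: "braket (- x) y = - braket x y"
  by (simp add: braket_def sum_negf)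

lemma braket_smult_right: "braket x (c *s y) = c * braket x y"
  by (simp add: braket_def sum_distrib_left mult.left_commute)

lemma braket_smult_left: "braket (c *s x) y = cnj c * braket x y"
  by (simp add: braket_def sum_distrib_left mult.assoc)

lemma braket_zero_right [simp]: "braket x 0 = 0"
  by (simp add: braket_def)

lemma braket_cnj: "cnj (braket x y) = braket y x"
  by (simp add: braket_def mult.commute)

lemma braket_axis: "braket (axis i 1) y = y $ i"
  unfolding braket_def axis_def by (simp add: if_distrib if_distribR cong: if_cong)

lemma braket_self: "braket x x = of_real (\<Sum>i\<in>UNIV. (cmod (x $ i))\<^sup>2)"
  unfolding braket_def of_real_sum
  by (rule sum.cong) (simp_all only: complex_norm_square mult.commute)

lemma braket_self_nonneg: "Re (braket x x) \<ge> 0"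
  by (simp add: braket_self sum_nonneg)

lemma braket_self_eq_0_imp: "braket x x = 0 \<Longrightarrow> x = 0"
proof -
  assume "braket x x = 0"
  hence "(\<Sum>i\<in>UNIV. (cmod (x $ i))\<^sup>2) = 0"
    by (simp only: braket_self of_real_eq_0_iff)
  hence "\<forall>i\<in>UNIV. (cmod (x $ i))\<^sup>2 = 0"
    by (subst (asm) sum_nonneg_eq_0_iff) auto
  thus "x = 0" by (simp add: vec_eq_iff)
qed

lemma matrix_vector_axis_nth: "(M *v axis i 1) $ j = M $ j $ i"
  unfolding matrix_vector_mult_def axis_def by (simp add: if_distrib if_distribR cong: if_cong)

lemma mtrace_commute: "mtrace (A ** B) = mtrace (B ** A)"
proof -
  have "mtrace (A ** B) = (\<Sum>i\<in>UNIV. \<Sum>k\<in>UNIV. A$i$k * B$k$i)"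
    unfolding mtrace_def matrix_matrix_mult_def by simp
  also have "\<dots> = (\<Sum>k\<in>UNIV. \<Sum>i\<in>UNIV. A$i$k * B$k$i)"
    by (rule sum.swap)
  also have "\<dots> = mtrace (B ** A)"
    unfolding mtrace_def matrix_matrix_mult_def by (simp add: mult.commute)
  finally show ?thesis .
qed

lemma mtrace_add: "mtrace (A + B) = mtrace A + mtrace B"
  by (simp add: mtrace_def sum.distrib)

lemma mtrace_diff: "mtrace (A - B) = mtrace A - mtrace B"
  by (simp add: mtrace_def sum_subtractf)

lemma mtrace_scaleR: "mtrace (r *\<^sub>R A) = of_real r * mtrace A"
proof -
  have "mtrace (r *\<^sub>R A) = r *\<^sub>R mtrace A"
    by (simp add: mtrace_def scaleR_sum_right)
  thus ?thesis by (simp add: scaleR_conv_of_real)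
qed

lemma mtrace_adjoint: "mtrace (adjoint A) = cnj (mtrace A)"
  by (simp add: mtrace_def)

lemma mtrace_adjoint_mult_mult:
  "mtrace (adjoint B ** S ** D) = (\<Sum>j\<in>UNIV. braket (column j B) (S *v column j D))"
  unfolding mtrace_def
proof (rule sum.cong [OF refl])
  fix j
  have "(adjoint B ** S ** D) $ j $ j = (\<Sum>k\<in>UNIV. \<Sum>i\<in>UNIV. cnj (B$i$j) * (S$i$k * D$k$j))"
    unfolding matrix_matrix_mult_def by (simp add: sum_distrib_right mult.assoc)
  also have "\<dots> = (\<Sum>i\<in>UNIV. \<Sum>k\<in>UNIV. cnj (B$i$j) * (S$i$k * D$k$j))"
    by (rule sum.swap)
  also have "\<dots> = braket (column j B) (S *v column j D)"
    unfolding braket_def matrix_vector_mult_def column_def by (simp add: sum_distrib_left)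
  finally show "(adjoint B ** S ** D) $ j $ j = braket (column j B) (S *v column j D)" .
qed

definition outer :: "complex^'n \<Rightarrow> complex^'n \<Rightarrow> complex^'n^'n" where
  "outer u v = (\<chi> i j. u $ i * cnj (v $ j))"

lemma outer_matrix_vector: "outer u v *v x = braket v x *s u"
  unfolding outer_def matrix_vector_mult_def braket_def
  by (simp add: vec_eq_iff sum_distrib_left mult.commute mult.left_commute)

lemma adjoint_outer: "adjoint (outer u v) = outer v u"
  by (simp add: outer_def vec_eq_iff)

lemma matrix_mult_outer: "M ** outer u v = outer (M *v u) v"
  unfolding outer_def matrix_matrix_mult_def matrix_vector_mult_def
  by (simp add: vec_eq_iff sum_distrib_right mult.assoc)

lemma mtrace_outer: "mtrace (outer u v) = braket v u"
  unfolding mtrace_def outer_def braket_def by (simp add: mult.commute)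

lemma mtrace_outer_mult: "mtrace (outer u v ** M) = braket v (M *v u)"
proof -
  have "mtrace (outer u v ** M) = (\<Sum>i\<in>UNIV. \<Sum>k\<in>UNIV. cnj (v$k) * (M$k$i * u$i))"
    unfolding mtrace_def outer_def matrix_matrix_mult_def by (simp add: sum_distrib_left mult_ac)
  also have "\<dots> = (\<Sum>k\<in>UNIV. \<Sum>i\<in>UNIV. cnj (v$k) * (M$k$i * u$i))"
    by (rule sum.swap)
  also have "\<dots> = braket v (M *v u)"
    unfolding braket_def matrix_vector_mult_def by (simp add: sum_distrib_left)
  finally show ?thesis .
qed

section \<open>Positive semidefinite forms\<close>

lemma hermitian_form_cnj:
  assumes "hermitian M"
  shows "cnj (braket x (M *v y)) = braket y (M *v x)"
proof -
  have "cnj (braket x (M *v y)) = braket (M *v y) x"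
    by (simp add: braket_cnj)
  also have "\<dots> = braket y (M *v x)"
    using assms by (simp add: braket_adjoint hermitian_def)
  finally show ?thesis .
qed

lemma hermitian_form_real:
  assumes "hermitian M"
  shows "braket x (M *v x) = of_real (Re (braket x (M *v x)))"
  using hermitian_form_cnj [OF assms, of x x] by (simp add: complex_eq_iff)

lemma hermitian_form_expand:
  "braket (x + t *s y) (M *v (x + t *s y)) =
     braket x (M *v x) + t * braket x (M *v y) + cnj t * braket y (M *v x)
     + cnj t * t * braket y (M *v y)"
  unfolding matrix_vector_right_distrib matrix_vector_smult braket_add_left
    braket_add_right braket_smult_left braket_smult_right distrib_left
  by (simp only: add_ac mult_ac)

lemma nonneg_quadratic_imp_le:
  fixes a S c :: real
  assumes "\<forall>r. 0 \<le> a - 2*r*S + r^2*S*c" "S \<ge> 0" "c \<ge> 0"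
  shows "S \<le> a*c"
proof (cases "c = 0")
  case True
  show ?thesis
  proof (rule ccontr)
    assume "\<not> S \<le> a * c"
    hence S: "S > 0" using True by simp
    have "0 \<le> a - 2*((\<bar>a\<bar>+1)/(2*S))*S + ((\<bar>a\<bar>+1)/(2*S))^2*S*c"
      using assms(1) by blast
    also have "\<dots> = a - (\<bar>a\<bar>+1)" using S True by (simp add: field_simps)
    finally show False by linarith
  qed
next
  case False
  hence c: "c > 0" using assms by simp
  have "0 \<le> a - 2*(1/c)*S + (1/c)^2*S*c" using assms(1) by blast
  also have "\<dots> = a - S/c" using c by (simp add: power2_eq_square field_simps)
  finally show ?thesis using c by (simp add: field_simps mult.commute)
qed

lemma psd_form_cauchy_schwarz:
  assumes h: "hermitian M" and p: "\<forall>x. Re (braket x (M *v x)) \<ge> 0"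
  shows "(cmod (braket x (M *v y)))\<^sup>2 \<le> Re (braket x (M *v x)) * Re (braket y (M *v y))"
proof -
  define s where "s = braket x (M *v y)"
  define a where "a = Re (braket x (M *v x))"
  define c where "c = Re (braket y (M *v y))"
  have sq: "s * cnj s = (of_real (cmod s))^2"
    by (simp only: complex_norm_square [symmetric] of_real_power)
  have "0 \<le> a - 2*r*(cmod s)^2 + r^2*(cmod s)^2*c" for r :: real
  proof -
    define t where "t = - (of_real r * cnj s)"
    have "braket (x + t *s y) (M *v (x + t *s y)) =
          of_real a + t * s + cnj (t * s) + cnj t * t * of_real c"
    proof -
      have "braket y (M *v x) = cnj s"
        unfolding s_def by (simp add: hermitian_form_cnj [OF h])
      moreover have "braket x (M *v x) = of_real a" "braket y (M *v y) = of_real c"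
        unfolding a_def c_def by (simp_all only: hermitian_form_real [OF h, symmetric])
      ultimately show ?thesis
        unfolding hermitian_form_expand s_def [symmetric] by simp
    qed
    moreover have "t * s = - of_real (r * (cmod s)^2)"
      unfolding t_def by (simp add: sq mult.commute mult.left_commute)
    moreover have "cnj t * t = of_real (r^2 * (cmod s)^2)"
      unfolding t_def by (simp add: power2_eq_square sq mult_ac)
    ultimately have "Re (braket (x + t *s y) (M *v (x + t *s y))) =
        a - 2*r*(cmod s)^2 + r^2*(cmod s)^2*c"
      by simp
    thus ?thesis using p by metis
  qed
  moreover have "c \<ge> 0" unfolding c_def using p by blast
  ultimately show ?thesis
    unfolding s_def [symmetric] a_def [symmetric] c_def [symmetric]
    by (intro nonneg_quadratic_imp_le) auto
qed

lemma braket_cauchy_schwarz: "(cmod (braket x y))\<^sup>2 \<le> Re (braket x x) * Re (braket y y)"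
  using psd_form_cauchy_schwarz [OF hermitian_mat1, of x y] by (simp add: braket_self_nonneg)

lemma psd_form_eq_0_imp:
  assumes h: "hermitian M" and p: "\<forall>x. Re (braket x (M *v x)) \<ge> 0"
    and z: "Re (braket v (M *v v)) = 0"
  shows "M *v v = 0"
proof -
  have "(cmod (braket (M *v v) (M *v v)))\<^sup>2 \<le> 0"
    using psd_form_cauchy_schwarz [OF h p, of "M *v v" v] z by simp
  thus ?thesis by (intro braket_self_eq_0_imp) simp
qed

lemma psd_form_le_trace:
  assumes h: "hermitian M" and p: "\<forall>x. Re (braket x (M *v x)) \<ge> 0"
  shows "Re (braket x (M *v x)) \<le> Re (mtrace M) * Re (braket x x)"
proof -
  define q where "q = Re (braket x (M *v x))"
  have diag: "Re (M $ i $ i) = Re (braket (axis i 1) (M *v axis i 1))" for i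
    by (simp add: braket_axis matrix_vector_axis_nth)
  have "q^2 = (cmod (braket x (M *v x)))^2"
    unfolding q_def by (subst hermitian_form_real [OF h]) simp
  also have "\<dots> \<le> Re (braket x x) * Re (braket (M *v x) (M *v x))"
    by (rule braket_cauchy_schwarz)
  also have "Re (braket (M *v x) (M *v x)) = (\<Sum>i\<in>UNIV. (cmod ((M *v x) $ i))\<^sup>2)"
    by (simp add: braket_self)
  also have "\<dots> \<le> (\<Sum>i\<in>UNIV. Re (M $ i $ i) * q)"
  proof (rule sum_mono)
    fix i
    have "(cmod ((M *v x) $ i))\<^sup>2 = (cmod (braket (axis i 1) (M *v x)))\<^sup>2"
      by (simp add: braket_axis)
    also have "\<dots> \<le> Re (M $ i $ i) * q"
      unfolding q_def diag by (rule psd_form_cauchy_schwarz [OF h p])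
    finally show "(cmod ((M *v x) $ i))\<^sup>2 \<le> Re (M $ i $ i) * q" .
  qed
  also have "(\<Sum>i\<in>UNIV. Re (M $ i $ i) * q) = Re (mtrace M) * q"
    by (simp add: mtrace_def sum_distrib_right)
  finally have "q^2 \<le> Re (braket x x) * (Re (mtrace M) * q)"
    using braket_self_nonneg [of x] by (simp add: mult_left_mono)
  hence "q * q \<le> (Re (braket x x) * Re (mtrace M)) * q"
    by (simp add: power2_eq_square mult_ac)
  moreover have "Re (mtrace M) \<ge> 0"
    unfolding mtrace_def Re_sum diag using p by (intro sum_nonneg) blast
  moreover have "q \<ge> 0" unfolding q_def using p by blast
  ultimately show ?thesis using braket_self_nonneg [of x] unfolding q_def [symmetric]
    by (cases "q > 0") (auto simp: mult.commute)
qed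

lemma psd_mtrace_nonneg:
  assumes "\<forall>x. Re (braket x (S *v x)) \<ge> 0"
  shows "Re (mtrace (adjoint D ** S ** D)) \<ge> 0"
  unfolding mtrace_adjoint_mult_mult Re_sum using assms by (intro sum_nonneg) blast

lemma hermitian_mtrace_cnj:
  assumes "hermitian S"
  shows "cnj (mtrace (adjoint B ** S ** D)) = mtrace (adjoint D ** S ** B)"
  using assms unfolding hermitian_def
  by (simp add: mtrace_adjoint [symmetric] adjoint_matrix_mult matrix_mul_assoc)

section \<open>The Moore--Penrose inverse of a Hermitian matrix\<close>

fun matpow :: "complex^'n^'n \<Rightarrow> nat \<Rightarrow> complex^'n^'n" where
  "matpow A 0 = mat 1"
| "matpow A (Suc k) = A ** matpow A k"

lemma matpow_add: "matpow A (i + j) = matpow A i ** matpow A j"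
  by (induct i) (simp_all add: matrix_mul_assoc)

lemma matpow_commute: "A ** matpow A k = matpow A k ** A"
proof (induct k)
  case (Suc k)
  have "A ** matpow A (Suc k) = A ** (matpow A k ** A)" by (simp add: Suc)
  thus ?case by (simp add: matrix_mul_assoc)
qed simp

lemma adjoint_matpow:
  assumes "hermitian A"
  shows "adjoint (matpow A k) = matpow A k"
  using assms
  by (induct k) (simp_all add: adjoint_matrix_mult hermitian_def matpow_commute)

lemma hermitian_matpow_kernel:
  assumes h: "hermitian A" and v: "matpow A k *v v = 0"
  shows "A *v v = 0"
  using v
proof (induct k rule: less_induct)
  case (less k)
  show ?case
  proof (cases k)
    case 0
    thus ?thesis using less.prems by simp
  next
    case (Suc j)
    show ?thesis
    proof (cases j)
      case 0
      thus ?thesis using less.prems Suc by simp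
    next
      case (Suc i)
      define w where "w = matpow A j *v v"
      \<comment> \<open>|A^j v|^2 = \<langle>v|A^(2j) v\<rangle> vanishes since 2j \<ge> k.\<close>
      have "braket w w = braket v (matpow A j *v w)"
        by (simp add: braket_adjoint adjoint_matpow [OF h] w_def)
      also have "matpow A j *v w = matpow A i *v (matpow A k *v v)"
        unfolding w_def matrix_vector_mul_assoc matpow_add [symmetric]
        using \<open>k = Suc j\<close> Suc by (simp add: matpow_add [symmetric])
      finally have "w = 0" using less.prems by (intro braket_self_eq_0_imp) simp
      thus ?thesis using less.hyps [of j] \<open>k = Suc j\<close> unfolding w_def by simp
    qed
  qed
qed

lemma hermitian_matpow_mult_eq_0:
  assumes "hermitian A" "matpow A k ** T = 0"
  shows "A ** T = 0"
  unfolding matrix_eq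
proof
  fix v
  have "matpow A k *v (T *v v) = 0"
    using assms(2) by (simp add: matrix_vector_mul_assoc)
  hence "A *v (T *v v) = 0" by (rule hermitian_matpow_kernel [OF assms(1)])
  thus "(A ** T) *v v = 0 *v v" by (simp add: matrix_vector_mul_assoc)
qed

lemma matpow_linearly_dependent:
  fixes A :: "complex^'n^'n"
  shows "\<exists>c::nat \<Rightarrow> real. \<exists>N. (\<exists>i. c i \<noteq> 0) \<and> (\<forall>i>N. c i = 0) \<and>
           (\<Sum>i\<le>N. c i *\<^sub>R matpow A i) = 0"
proof (cases "inj_on (matpow A) {..DIM(complex^'n^'n)}")
  case True
  define D where "D = DIM(complex^'n^'n)"
  define S where "S = matpow A ` {..D}"
  have "card S = Suc D" unfolding S_def D_def using card_image [OF True] by simp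
  hence "dependent S" using dependent_biggerset [of S] by (simp add: D_def)
  then obtain u where u: "\<exists>v\<in>S. u v \<noteq> 0" "(\<Sum>v\<in>S. u v *\<^sub>R v) = 0"
    using real_vector.dependent_finite [of S] by (auto simp: S_def)
  define c where "c i = (if i \<le> D then u (matpow A i) else 0)" for i
  have "(\<Sum>i\<le>D. c i *\<^sub>R matpow A i) = (\<Sum>i\<le>D. u (matpow A i) *\<^sub>R matpow A i)"
    by (rule sum.cong) (simp_all add: c_def)
  also have "\<dots> = (\<Sum>v\<in>S. u v *\<^sub>R v)"
    unfolding S_def using sum.reindex [OF True [folded D_def], of "\<lambda>v. u v *\<^sub>R v"] by simp
  finally have "(\<Sum>i\<le>D. c i *\<^sub>R matpow A i) = 0" using u by simp
  moreover obtain i where "i \<le> D" "u (matpow A i) \<noteq> 0" using u(1) unfolding S_def by auto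
  hence "c i \<noteq> 0" by (simp add: c_def)
  moreover have "\<forall>i>D. c i = 0" by (simp add: c_def)
  ultimately show ?thesis by blast
next
  case False
  then obtain i j where ij: "i \<noteq> j" "matpow A i = matpow A j"
      "i \<le> DIM(complex^'n^'n)" "j \<le> DIM(complex^'n^'n)"
    unfolding inj_on_def by auto
  define D where "D = DIM(complex^'n^'n)"
  define c where "c k = (if k = i then 1 else if k = j then -1 else (0::real))" for k
  have "(\<Sum>k\<le>D. c k *\<^sub>R matpow A k) =
        (\<Sum>k\<le>D. (if k = i then matpow A i else 0) - (if k = j then matpow A j else 0))"
    by (rule sum.cong) (auto simp: c_def ij(1) ij(1) [symmetric])
  also have "\<dots> = 0"
    using ij unfolding D_def by (simp add: sum_subtractf)
  finally have "(\<Sum>k\<le>D. c k *\<^sub>R matpow A k) = 0" .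
  moreover have "c i \<noteq> 0" by (simp add: c_def)
  moreover have "\<forall>k>D. c k = 0" using ij unfolding c_def D_def by auto
  ultimately show ?thesis by blast
qed

definition real_poly_in :: "complex^'n^'n \<Rightarrow> complex^'n^'n \<Rightarrow> bool" where
  "real_poly_in A Y \<longleftrightarrow> (\<exists>e::nat \<Rightarrow> real. \<exists>N. Y = (\<Sum>j\<le>N. e j *\<^sub>R matpow A j))"

lemma real_poly_in_scaleR:
  assumes "real_poly_in A Y"
  shows "real_poly_in A (r *\<^sub>R Y)"
proof -
  obtain e N where Y: "Y = (\<Sum>j\<le>N. e j *\<^sub>R matpow A j)"
    using assms unfolding real_poly_in_def by blast
  show ?thesis
    unfolding real_poly_in_def
  proof (intro exI)
    show "r *\<^sub>R Y = (\<Sum>j\<le>N. (r * e j) *\<^sub>R matpow A j)"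
      using Y by (simp add: scaleR_sum_right)
  qed
qed

lemma real_poly_in_commute: "real_poly_in A Y \<Longrightarrow> Y ** A = A ** Y"
  unfolding real_poly_in_def
  by (auto simp: matrix_mult_sum_left matrix_mult_sum_right matrix_scalar_ac
      scalar_matrix_assoc [symmetric] matpow_commute intro!: sum.cong)

lemma real_poly_in_hermitian: "hermitian A \<Longrightarrow> real_poly_in A Y \<Longrightarrow> hermitian Y"
  unfolding real_poly_in_def hermitian_def
  by (auto simp: adjoint_sum adjoint_scaleR adjoint_matpow [unfolded hermitian_def])

lemma matpow_lowest_dependence:
  fixes A :: "complex^'n^'n"
  shows "\<exists>k c R. c \<noteq> 0 \<and> real_poly_in A R \<and> matpow A k ** (c *\<^sub>R mat 1 + A ** R) = 0"
proof -
  obtain c :: "nat \<Rightarrow> real" and N where c: "\<exists>i. c i \<noteq> 0" "\<forall>i>N. c i = 0"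
    "(\<Sum>i\<le>N. c i *\<^sub>R matpow A i) = 0"
    using matpow_linearly_dependent [of A] by blast
  define k where "k = (LEAST i. c i \<noteq> 0)"
  have ck: "c k \<noteq> 0" unfolding k_def using c(1) by (rule LeastI_ex)
  have below: "c i = 0" if "i < k" for i
    using that unfolding k_def by (rule not_less_Least [THEN notnotD])
  define g where "g i = c i *\<^sub>R matpow A i" for i
  define d where "d j = c (k + j)" for j
  define R where "R = (\<Sum>j\<le>N. d (Suc j) *\<^sub>R matpow A j)"
  have "0 = (\<Sum>i\<le>N. g i)"
    using c(3) by (simp add: g_def)
  also have "\<dots> = (\<Sum>i\<le>N + k. g i)"
    by (rule sum.mono_neutral_left) (auto simp: g_def c(2))
  also have "\<dots> = (\<Sum>i\<in>{k..N + k}. g i)"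
    by (rule sum.mono_neutral_right) (auto simp: g_def below)
  also have "\<dots> = (\<Sum>j\<le>N. matpow A k ** (d j *\<^sub>R matpow A j))"
    using sum.shift_bounds_cl_nat_ivl [of g 0 k N]
    by (simp add: atLeast0AtMost g_def d_def matrix_scalar_ac scalar_matrix_assoc [symmetric]
        matpow_add [symmetric] add.commute)
  also have "\<dots> = matpow A k ** (\<Sum>j\<le>N. d j *\<^sub>R matpow A j)"
    by (simp add: matrix_mult_sum_left)
  also have "(\<Sum>j\<le>N. d j *\<^sub>R matpow A j) = (\<Sum>j\<le>Suc N. d j *\<^sub>R matpow A j)"
    by (rule sum.mono_neutral_left) (auto simp: d_def c(2))
  also have "(\<Sum>j\<le>Suc N. d j *\<^sub>R matpow A j) = c k *\<^sub>R mat 1 + A ** R"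
    unfolding sum.atMost_Suc_shift R_def
    by (simp add: d_def matrix_mult_sum_left matrix_scalar_ac scalar_matrix_assoc [symmetric])
  finally have "matpow A k ** (c k *\<^sub>R mat 1 + A ** R) = 0" ..
  moreover have "real_poly_in A R" unfolding real_poly_in_def R_def by (intro exI) (rule refl)
  ultimately show ?thesis using ck by blast
qed

lemma hermitian_eq_square_mult_real_poly:
  fixes A :: "complex^'n^'n"
  assumes h: "hermitian A"
  obtains Y where "real_poly_in A Y" "A ** A ** Y = A"
proof -
  obtain k c R where c: "c \<noteq> 0" and R: "real_poly_in A R"
    and ker: "matpow A k ** (c *\<^sub>R mat 1 + A ** R) = 0"
    using matpow_lowest_dependence [of A] by blast
  have "A ** (c *\<^sub>R mat 1 + A ** R) = 0"
    using hermitian_matpow_mult_eq_0 [OF h ker] .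
  hence cA: "c *\<^sub>R A = - (A ** A ** R)"
    by (simp add: matrix_add_ldistrib matrix_scalar_ac matrix_mul_assoc eq_neg_iff_add_eq_0)
  have "A = (1 / c) *\<^sub>R (c *\<^sub>R A)" using c by simp
  also have "\<dots> = A ** A ** ((- 1 / c) *\<^sub>R R)"
    unfolding cA by (simp add: matrix_scalar_ac scalar_matrix_assoc [symmetric] matrix_neg_right)
  finally have "A ** A ** ((- 1 / c) *\<^sub>R R) = A" ..
  thus ?thesis using that real_poly_in_scaleR [OF R] by blast
qed

definition moore_penrose :: "complex^'n^'n \<Rightarrow> complex^'n^'n \<Rightarrow> bool" where
  "moore_penrose A X \<longleftrightarrow> A ** X ** A = A \<and> X ** A ** X = X \<and>
     adjoint (A ** X) = A ** X \<and> adjoint (X ** A) = X ** A"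

lemma moore_penrose_unique:
  assumes "moore_penrose A X" "moore_penrose A Z"
  shows "X = Z"
proof -
  have x1: "A ** X ** A = A" and x2: "X ** A ** X = X" and x3: "adjoint (A ** X) = A ** X"
    and x4: "adjoint (X ** A) = X ** A"
    using assms(1) unfolding moore_penrose_def by auto
  have z1: "A ** Z ** A = A" and z2: "Z ** A ** Z = Z" and z3: "adjoint (A ** Z) = A ** Z"
    and z4: "adjoint (Z ** A) = Z ** A"
    using assms(2) unfolding moore_penrose_def by auto
  have AX: "A ** X = A ** X ** (A ** Z)"
  proof -
    have "A ** X = adjoint X ** adjoint (A ** Z ** A)"
      using x3 z1 by (simp add: adjoint_matrix_mult)
    also have "\<dots> = adjoint (A ** X) ** adjoint (A ** Z)"
      by (simp add: adjoint_matrix_mult matrix_mul_assoc)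
    finally show ?thesis using x3 z3 by simp
  qed
  have ZA: "Z ** A = X ** A ** (Z ** A)"
  proof -
    have "Z ** A = adjoint (A ** X ** A) ** adjoint Z"
      using z4 x1 by (simp add: adjoint_matrix_mult)
    also have "\<dots> = adjoint (X ** A) ** adjoint (Z ** A)"
      by (simp add: adjoint_matrix_mult matrix_mul_assoc)
    finally show ?thesis using x4 z4 by simp
  qed
  have "X = X ** (A ** X)" using x2 by (simp add: matrix_mul_assoc)
  also have "\<dots> = X ** (A ** X ** (A ** Z))" using AX by (rule arg_cong)
  also have "\<dots> = X ** A ** Z" using x2 by (simp add: matrix_mul_assoc)
  also have "\<dots> = X ** A ** (Z ** A ** Z)" using z2 by simp
  also have "\<dots> = X ** A ** (Z ** A) ** Z" by (simp add: matrix_mul_assoc)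
  also have "\<dots> = Z ** A ** Z" using ZA by simp
  finally show ?thesis using z2 by simp
qed

lemma hermitian_moore_penrose_exists:
  assumes h: "hermitian A"
  shows "\<exists>X. moore_penrose A X"
proof -
  obtain Y where Y: "real_poly_in A Y" and AAY: "A ** A ** Y = A"
    using hermitian_eq_square_mult_real_poly [OF h] by blast
  have comm: "Y ** A = A ** Y" by (rule real_poly_in_commute [OF Y])
  \<comment> \<open>E = AY is the orthogonal projection onto the range of A, and EY inverts A there.\<close>
  define E where "E = A ** Y"
  have AE: "A ** E = A"
    unfolding E_def using AAY by (simp add: matrix_mul_assoc)
  have EA: "E ** A = A"
  proof -
    have "E ** A = A ** (Y ** A)" unfolding E_def by (simp add: matrix_mul_assoc)
    also have "\<dots> = A" unfolding comm E_def [symmetric] by (rule AE)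
    finally show ?thesis .
  qed
  have EE: "E ** E = E"
  proof -
    have "E ** E = (E ** A) ** Y" unfolding E_def by (simp add: matrix_mul_assoc)
    also have "\<dots> = E" by (simp only: EA E_def [symmetric])
    finally show ?thesis .
  qed
  have hE: "adjoint E = E"
    using h real_poly_in_hermitian [OF h Y] comm
    unfolding E_def hermitian_def by (simp add: adjoint_matrix_mult)
  have AX: "A ** (E ** Y) = E"
    by (simp only: matrix_mul_assoc AE) (simp only: E_def)
  have XA: "E ** Y ** A = E"
    by (simp only: matrix_mul_assoc [symmetric] comm) (simp only: E_def [symmetric] EE)
  have "moore_penrose A (E ** Y)"
    unfolding moore_penrose_def
  proof (intro conjI)
    show "A ** (E ** Y) ** A = A" by (simp only: AX EA)
    show "E ** Y ** A ** (E ** Y) = E ** Y" by (simp only: XA) (simp only: matrix_mul_assoc EE)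
    show "adjoint (A ** (E ** Y)) = A ** (E ** Y)" by (simp only: AX hE)
    show "adjoint (E ** Y ** A) = E ** Y ** A" by (simp only: XA hE)
  qed
  thus ?thesis ..
qed

lemma hermitian_pinv:
  assumes "hermitian A"
  shows "moore_penrose A (pinv A)"
proof -
  obtain X where X: "moore_penrose A X" using hermitian_moore_penrose_exists [OF assms] ..
  have "pinv A = (THE X. moore_penrose A X)"
    unfolding pinv_def moore_penrose_def by simp
  also have "moore_penrose A (THE X. moore_penrose A X)"
    using X by (rule theI) (rule moore_penrose_unique [OF _ X])
  finally show ?thesis .
qed

section \<open>A variational lower bound for the purity of coherence\<close>

lemma supp_subset_imp_mult_eq:
  assumes "supp M \<subseteq> supp A" "A ** X ** A = A"
  shows "A ** X ** M = M"
  unfolding matrix_eq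
proof
  fix z
  obtain u where u: "M *v z = A *v u"
    using assms(1) unfolding supp_def by auto
  have "(A ** X ** M) *v z = (A ** X ** A) *v u"
    by (simp add: u matrix_vector_mul_assoc [symmetric])
  thus "(A ** X ** M) *v z = M *v z" using assms(2) u by simp
qed

lemma psd_sandwich_eq_0:
  assumes h: "hermitian S" and p: "\<forall>x. Re (braket x (S *v x)) \<ge> 0"
    and G: "G ** S ** adjoint G = 0"
  shows "G ** S = 0"
proof -
  have "S ** adjoint G = 0"
    unfolding matrix_eq
  proof
    fix x
    have "braket x ((G ** S ** adjoint G) *v x) = braket x (G *v (S *v (adjoint G *v x)))"
      by (simp add: matrix_vector_mul_assoc matrix_mul_assoc)
    also have "\<dots> = braket (adjoint G *v x) (S *v (adjoint G *v x))"
      by (rule braket_adjoint)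
    finally have "S *v (adjoint G *v x) = 0" using G by (intro psd_form_eq_0_imp [OF h p]) simp
    thus "(S ** adjoint G) *v x = 0 *v x" by (simp add: matrix_vector_mul_assoc)
  qed
  hence "adjoint (S ** adjoint G) = 0" by simp
  thus ?thesis using h by (simp add: adjoint_matrix_mult hermitian_def)
qed

lemma supp_subset_imp_mult_factor:
  assumes hs: "hermitian \<sigma>" and ps: "\<forall>x. Re (braket x (\<sigma> *v x)) \<ge> 0" and hH: "hermitian H"
    and sp: "supp (H ** \<sigma> ** H) \<subseteq> supp \<sigma>" and X: "moore_penrose \<sigma> X"
  shows "H ** \<sigma> = \<sigma> ** (X ** H ** \<sigma>)"
proof -
  define P where "P = \<sigma> ** X"
  have aP: "adjoint P = P" and Ps: "P ** \<sigma> = \<sigma>"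
    using X unfolding P_def moore_penrose_def by auto
  have PHsH: "P ** (H ** \<sigma> ** H) = H ** \<sigma> ** H"
    unfolding P_def using supp_subset_imp_mult_eq [OF sp] X
    by (simp add: moore_penrose_def matrix_mul_assoc)
  define G where "G = (mat 1 - P) ** H"
  have "G ** \<sigma> ** adjoint G = (G ** \<sigma> ** H) ** (mat 1 - P)"
    using hH aP unfolding G_def hermitian_def
    by (simp add: adjoint_matrix_mult adjoint_diff matrix_mul_assoc)
  also have "G ** \<sigma> ** H = 0"
    unfolding G_def using PHsH by (simp add: matrix_diff_rdistrib matrix_mul_assoc)
  finally have "G ** \<sigma> = 0" by (intro psd_sandwich_eq_0 [OF hs ps]) simp
  hence "H ** \<sigma> = P ** H ** \<sigma>"
    unfolding G_def by (simp add: matrix_diff_rdistrib)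
  thus ?thesis unfolding P_def by (simp add: matrix_mul_assoc)
qed

lemma psd_mtrace_completed_square:
  assumes hs: "hermitian S" and ps: "\<forall>x. Re (braket x (S *v x)) \<ge> 0"
  shows "2 * Re (mtrace (adjoint B ** S ** Y)) - Re (mtrace (adjoint B ** S ** B))
           \<le> Re (mtrace (adjoint Y ** S ** Y))"
proof -
  have "0 \<le> Re (mtrace (adjoint (Y - B) ** S ** (Y - B)))"
    by (rule psd_mtrace_nonneg [OF ps])
  also have "\<dots> = Re (mtrace (adjoint Y ** S ** Y)) - Re (mtrace (adjoint Y ** S ** B))
      - Re (mtrace (adjoint B ** S ** Y)) + Re (mtrace (adjoint B ** S ** B))"
    by (simp add: adjoint_diff matrix_diff_ldistrib matrix_diff_rdistrib mtrace_diff)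
  also have "Re (mtrace (adjoint Y ** S ** B)) = Re (mtrace (adjoint B ** S ** Y))"
    using arg_cong [OF hermitian_mtrace_cnj [OF hs, of B Y], of Re] by simp
  finally show ?thesis by simp
qed

lemma mtrace_mult_moore_penrose_factor:
  assumes hs: "hermitian \<sigma>" and hH: "hermitian H" and X: "moore_penrose \<sigma> X"
    and HsY: "H ** \<sigma> = \<sigma> ** Y"
  shows "mtrace (H ** \<sigma> ** \<sigma> ** H ** X) = mtrace (adjoint Y ** \<sigma> ** Y)"
proof -
  have sH: "\<sigma> ** H = adjoint Y ** \<sigma>"
    using arg_cong [OF HsY, of adjoint] hs hH by (simp add: adjoint_matrix_mult hermitian_def)
  have "mtrace (H ** \<sigma> ** \<sigma> ** H ** X) = mtrace ((\<sigma> ** H ** X) ** (H ** \<sigma>))"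
    using mtrace_commute [of "H ** \<sigma>" "\<sigma> ** H ** X"] by (simp add: matrix_mul_assoc)
  also have "(\<sigma> ** H ** X) ** (H ** \<sigma>) = adjoint Y ** (\<sigma> ** X ** \<sigma>) ** Y"
    by (simp add: sH HsY matrix_mul_assoc)
  finally show ?thesis using X by (simp add: moore_penrose_def)
qed

lemma purity_trace_ge_variational:
  fixes \<sigma> H C :: "complex^'n^'n"
  assumes hs: "hermitian \<sigma>" and ps: "\<forall>x. Re (braket x (\<sigma> *v x)) \<ge> 0" and hH: "hermitian H"
    and sp: "supp (H ** \<sigma> ** H) \<subseteq> supp \<sigma>"
  shows "2 * Re (mtrace (adjoint C ** (H ** \<sigma> - \<sigma> ** H))) - Re (mtrace (adjoint C ** \<sigma> ** C))
         \<le> Re (mtrace (H ** \<sigma> ** \<sigma> ** H ** pinv \<sigma>) - mtrace (\<sigma> ** H ** H))"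
proof -
  define X where "X = pinv \<sigma>"
  define Y where "Y = X ** H ** \<sigma>"
  have X: "moore_penrose \<sigma> X" unfolding X_def by (rule hermitian_pinv [OF hs])
  have aH: "adjoint H = H" using hH unfolding hermitian_def .
  have HsY: "H ** \<sigma> = \<sigma> ** Y"
    unfolding Y_def by (rule supp_subset_imp_mult_factor [OF hs ps hH sp X])
  have t1: "mtrace (H ** \<sigma> ** \<sigma> ** H ** X) = mtrace (adjoint Y ** \<sigma> ** Y)"
    by (rule mtrace_mult_moore_penrose_factor [OF hs hH X HsY])
  have tr_HHs: "mtrace (H ** H ** \<sigma>) = mtrace (\<sigma> ** H ** H)"
    using mtrace_commute [of "H ** H" \<sigma>] by (simp add: matrix_mul_assoc)
  \<comment> \<open>Complete the square around B = H + C.\<close>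
  define B where "B = H + C"
  have "mtrace (adjoint B ** \<sigma> ** Y) = mtrace (adjoint B ** (H ** \<sigma>))"
    by (simp add: HsY matrix_mul_assoc)
  also have "\<dots> = mtrace (\<sigma> ** H ** H) + mtrace (adjoint C ** H ** \<sigma>)"
    unfolding B_def using tr_HHs
    by (simp add: adjoint_add aH matrix_add_rdistrib mtrace_add matrix_mul_assoc)
  finally have "mtrace (adjoint B ** \<sigma> ** Y) = mtrace (\<sigma> ** H ** H) + mtrace (adjoint C ** H ** \<sigma>)" .
  moreover have "mtrace (adjoint B ** \<sigma> ** B) = mtrace (\<sigma> ** H ** H)
      + mtrace (adjoint H ** \<sigma> ** C) + mtrace (adjoint C ** \<sigma> ** H) + mtrace (adjoint C ** \<sigma> ** C)"
    unfolding B_def using mtrace_commute [of H "\<sigma> ** H"]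
    by (simp add: adjoint_add aH matrix_add_ldistrib matrix_add_rdistrib mtrace_add matrix_mul_assoc)
  moreover have "Re (mtrace (adjoint H ** \<sigma> ** C)) = Re (mtrace (adjoint C ** \<sigma> ** H))"
    using arg_cong [OF hermitian_mtrace_cnj [OF hs, of C H], of Re] by simp
  moreover have "mtrace (adjoint C ** (H ** \<sigma> - \<sigma> ** H)) =
      mtrace (adjoint C ** H ** \<sigma>) - mtrace (adjoint C ** \<sigma> ** H)"
    by (simp add: matrix_diff_ldistrib mtrace_diff matrix_mul_assoc)
  ultimately show ?thesis
    using psd_mtrace_completed_square [OF hs ps, of B Y] t1 unfolding X_def by simp
qed

section \<open>The test matrix\<close>

lemma psd_form_orthogonal_eigenvector_le:
  fixes \<sigma> :: "complex^'n^'n" and \<Phi> y :: "complex^'n" and p :: real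
  assumes hs: "hermitian \<sigma>" and ps: "\<forall>x. Re (braket x (\<sigma> *v x)) \<ge> 0"
    and tr: "mtrace \<sigma> = 1" and n\<Phi>: "braket \<Phi> \<Phi> = 1"
    and eig: "\<sigma> *v \<Phi> = of_real p *s \<Phi>" and y: "braket \<Phi> y = 0"
  shows "Re (braket y (\<sigma> *v y)) \<le> (1 - p) * Re (braket y y)"
proof -
  \<comment> \<open>Removing the eigenvector leaves a positive matrix of trace 1 - p.\<close>
  define M where "M = \<sigma> - p *\<^sub>R outer \<Phi> \<Phi>"
  have Mx: "braket x (M *v x) = braket x (\<sigma> *v x) - of_real p * (braket \<Phi> x * braket x \<Phi>)" for x
    unfolding M_def
    by (simp add: matrix_vector_mult_diff_rdistrib scaleR_matrix_vector outer_matrix_vector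
        braket_diff_right scaleR_eq_of_real_smult braket_smult_right mult_ac)
  have hM: "hermitian M"
    using hs unfolding hermitian_def M_def by (simp add: adjoint_diff adjoint_scaleR adjoint_outer)
  have pM: "\<forall>x. Re (braket x (M *v x)) \<ge> 0"
  proof
    fix x
    define \<alpha> where "\<alpha> = braket \<Phi> x"
    define z where "z = x - \<alpha> *s \<Phi>"
    have z0: "braket \<Phi> z = 0"
      unfolding z_def \<alpha>_def by (simp add: braket_diff_right braket_smult_right n\<Phi>)
    have zs: "braket z (\<sigma> *v \<Phi>) = 0"
      using z0 by (simp add: eig braket_smult_right braket_cnj [symmetric, of \<Phi> z])
    have sz: "braket \<Phi> (\<sigma> *v z) = 0"
      using hermitian_form_cnj [OF hs, of z \<Phi>] zs by simp
    have "braket x (\<sigma> *v x) = braket z (\<sigma> *v z) + \<alpha> * braket z (\<sigma> *v \<Phi>)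
        + cnj \<alpha> * braket \<Phi> (\<sigma> *v z) + cnj \<alpha> * \<alpha> * braket \<Phi> (\<sigma> *v \<Phi>)"
      using hermitian_form_expand [of z \<alpha> \<Phi> \<sigma>] unfolding z_def by simp
    hence "braket x (\<sigma> *v x) = braket z (\<sigma> *v z) + cnj \<alpha> * \<alpha> * of_real p"
      using zs sz by (simp add: eig braket_smult_right n\<Phi>)
    moreover have "braket x \<Phi> = cnj \<alpha>" unfolding \<alpha>_def by (simp add: braket_cnj)
    ultimately have "braket x (M *v x) = braket z (\<sigma> *v z)"
      using Mx [of x] unfolding \<alpha>_def [symmetric] by (simp add: mult_ac)
    thus "Re (braket x (M *v x)) \<ge> 0" using ps by simp
  qed
  have trM: "mtrace M = 1 - of_real p"
    unfolding M_def by (simp add: mtrace_diff mtrace_scaleR mtrace_outer n\<Phi> tr)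
  have "braket y (\<sigma> *v y) = braket y (M *v y)" using Mx [of y] y by simp
  also have "Re \<dots> \<le> Re (mtrace M) * Re (braket y y)" by (rule psd_form_le_trace [OF hM pM])
  finally show ?thesis using trM by simp
qed

lemma purity_trace_ge_test_matrix:
  fixes \<sigma> H :: "complex^'n^'n" and \<Phi> w :: "complex^'n" and p a b :: real
  assumes hs: "hermitian \<sigma>" and ps: "\<forall>x. Re (braket x (\<sigma> *v x)) \<ge> 0" and hH: "hermitian H"
    and sp: "supp (H ** \<sigma> ** H) \<subseteq> supp \<sigma>"
    and n\<Phi>: "braket \<Phi> \<Phi> = 1" and eig: "\<sigma> *v \<Phi> = of_real p *s \<Phi>"
    and w: "(H ** \<sigma> - \<sigma> ** H) *v \<Phi> = w" and w\<Phi>: "braket \<Phi> w = 0"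
  shows "2 * (a + b) * Re (braket w w) - b^2 * Re (braket w (\<sigma> *v w)) - a^2 * p * Re (braket w w)
           \<le> Re (mtrace (H ** \<sigma> ** \<sigma> ** H ** pinv \<sigma>) - mtrace (\<sigma> ** H ** H))"
proof -
  define K where "K = H ** \<sigma> - \<sigma> ** H"
  define C where "C = outer (of_real b *s w) \<Phi> - outer \<Phi> (of_real a *s w)"
  have w\<Phi>': "braket w \<Phi> = 0" using w\<Phi> braket_cnj [of \<Phi> w] by simp
  have "adjoint K = \<sigma> ** H - H ** \<sigma>"
    using hs hH unfolding K_def hermitian_def by (simp add: adjoint_diff adjoint_matrix_mult)
  hence "adjoint K *v \<Phi> = - w"
    using w [symmetric] unfolding K_def by (simp add: matrix_vector_mult_diff_rdistrib)
  hence \<Phi>Kw: "braket \<Phi> (K *v w) = - braket w w"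
    by (simp add: braket_adjoint braket_neg_left)
  have aC: "adjoint C = outer \<Phi> (of_real b *s w) - outer (of_real a *s w) \<Phi>"
    unfolding C_def by (simp add: adjoint_diff adjoint_outer)
  have "mtrace (adjoint C ** K) = of_real (a + b) * braket w w"
    unfolding aC using w unfolding K_def [symmetric]
    by (simp add: matrix_diff_rdistrib mtrace_diff mtrace_outer_mult braket_smult_left
        braket_smult_right matrix_vector_smult \<Phi>Kw algebra_simps)
  moreover have "mtrace (adjoint C ** \<sigma> ** C) =
      of_real (b^2) * braket w (\<sigma> *v w) + of_real (a^2 * p) * braket w w"
  proof -
    have sC: "\<sigma> ** C = outer (\<sigma> *v (of_real b *s w)) \<Phi> - outer (\<sigma> *v \<Phi>) (of_real a *s w)"
      unfolding C_def by (simp add: matrix_diff_ldistrib matrix_mult_outer)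
    have "mtrace (adjoint C ** \<sigma> ** C) = mtrace (adjoint C ** (\<sigma> ** C))"
      by (simp add: matrix_mul_assoc)
    also have "\<dots> = of_real (b^2) * braket w (\<sigma> *v w) + of_real (a^2 * p) * braket w w"
      unfolding aC sC
      by (simp add: matrix_diff_rdistrib mtrace_diff mtrace_outer_mult outer_matrix_vector
          matrix_vector_mult_diff_rdistrib braket_diff_right braket_diff_left braket_smult_left
          braket_smult_right matrix_vector_smult eig n\<Phi> w\<Phi> w\<Phi>' power2_eq_square
          braket_neg_right algebra_simps)
    finally show ?thesis .
  qed
  ultimately show ?thesis
    using purity_trace_ge_variational [OF hs ps hH sp, of C] unfolding K_def
    by (simp add: algebra_simps)
qed

section \<open>Variance and the final estimate\<close>

definition deviation :: "complex^'n^'n \<Rightarrow> complex^'n \<Rightarrow> complex^'n" where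
  "deviation H \<Phi> = H *v \<Phi> - braket \<Phi> (H *v \<Phi>) *s \<Phi>"

lemma braket_deviation: "braket \<Phi> \<Phi> = 1 \<Longrightarrow> braket \<Phi> (deviation H \<Phi>) = 0"
  by (simp add: deviation_def braket_diff_right braket_smult_right)

lemma variance_eq_deviation:
  assumes hH: "hermitian H" and n\<Phi>: "braket \<Phi> \<Phi> = 1"
  shows "variance H \<Phi> = Re (braket (deviation H \<Phi>) (deviation H \<Phi>))"
proof -
  define \<mu> where "\<mu> = braket \<Phi> (H *v \<Phi>)"
  have \<mu>: "\<mu> = of_real (Re \<mu>)" unfolding \<mu>_def by (rule hermitian_form_real [OF hH])
  have c\<mu>: "cnj \<mu> = \<mu>" by (metis \<mu> complex_cnj_complex_of_real)
  have "braket (H *v \<Phi>) \<Phi> = \<mu>"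
    unfolding \<mu>_def by (metis braket_cnj \<mu>_def c\<mu>)
  hence "braket (deviation H \<Phi>) (deviation H \<Phi>) = braket (H *v \<Phi>) (H *v \<Phi>) - \<mu> * \<mu>"
    unfolding deviation_def \<mu>_def [symmetric]
    by (simp add: braket_diff_right braket_diff_left braket_smult_right braket_smult_left n\<Phi>
        \<mu>_def [symmetric] c\<mu> algebra_simps)
  also have "\<mu> * \<mu> = of_real ((Re \<mu>)^2)"
    by (subst (1 2) \<mu>) (simp add: power2_eq_square)
  also have "braket (H *v \<Phi>) (H *v \<Phi>) = braket \<Phi> ((H ** H) *v \<Phi>)"
    using hH by (simp add: braket_adjoint hermitian_def matrix_vector_mul_assoc [symmetric])
  finally show ?thesis unfolding variance_def \<mu>_def by simp
qed

lemma braket_shift_ge: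
  assumes S: "Re (braket v (S *v v)) \<le> (1 - p) * Re (braket v v)" and p: "1/2 \<le> p"
  shows "(2*p - 1)^2 * Re (braket v v) \<le> Re (braket (of_real p *s v - S *v v) (of_real p *s v - S *v v))"
    (is "_ \<le> Re (braket ?w ?w)")
proof -
  define V where "V = Re (braket v v)"
  define W where "W = Re (braket ?w ?w)"
  have V0: "V \<ge> 0" and W0: "W \<ge> 0" unfolding V_def W_def by (rule braket_self_nonneg)+
  have "(2*p - 1) * V \<le> Re (braket v ?w)"
    using S unfolding V_def by (simp add: braket_diff_right braket_smult_right algebra_simps)
  moreover have "0 \<le> (2*p - 1) * V" using p V0 by simp
  moreover have "Re (braket v ?w) \<le> cmod (braket v ?w)"
    using abs_Re_le_cmod [of "braket v ?w"] by linarith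
  ultimately have "((2*p - 1) * V)^2 \<le> (cmod (braket v ?w))^2"
    by (intro power_mono) auto
  also have "\<dots> \<le> V * W" unfolding V_def W_def by (rule braket_cauchy_schwarz)
  finally have "V * ((2*p - 1)^2 * V) \<le> V * W" by (simp add: power2_eq_square mult_ac)
  thus ?thesis using V0 W0 unfolding V_def [symmetric] W_def [symmetric]
    by (cases "V = 0") (auto simp: mult_le_cancel_left)
qed

lemma purity_real_bound:
  fixes p V W P :: real
  assumes p: "0 \<le> p" "p < 1" and V: "0 \<le> V"
    and test: "\<And>a b. 2 * (a + b) * W - b^2 * ((1 - p) * W) - a^2 * p * W \<le> P"
    and gap: "1/2 < p \<Longrightarrow> (2*p - 1)^2 * V \<le> W"
  shows "V * (p^2 / (1 - p) - 1) \<le> P"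
proof (cases "p^2 / (1 - p) - 1 \<le> 0")
  case True
  have "V * (p^2 / (1 - p) - 1) \<le> 0" using V True by (rule mult_nonneg_nonpos)
  thus ?thesis using test [of 0 0] by simp
next
  case False
  have q: "0 < 1 - p" using p by simp
  hence gt: "1 - p < p^2" using False by (simp add: field_simps)
  have ph: "1/2 < p"
  proof (rule ccontr)
    assume le: "\<not> 1/2 < p"
    hence "p^2 \<le> (1/2)^2" using p by (intro power_mono) auto
    hence "p^2 \<le> 1/4" by (simp add: power_divide)
    with gt le show False by linarith
  qed
  have e1: "p^2 / (1 - p) - 1 = p * (p^2 + p - 1) / (p * (1 - p))"
    using q ph by (simp add: field_simps power2_eq_square)
  have e2: "(1/p + 1/(1 - p)) * (2*p - 1)^2 = (2*p - 1)^2 / (p * (1 - p))"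
    using q ph by (simp add: field_simps)
  have "(2*p - 1)^2 - p * (p^2 + p - 1) = (1 - p)^3"
    by (simp add: power2_eq_square power3_eq_cube algebra_simps)
  moreover have "0 \<le> (1 - p)^3" using q by simp
  ultimately have "p * (p^2 + p - 1) \<le> (2*p - 1)^2" by linarith
  hence "p^2 / (1 - p) - 1 \<le> (1/p + 1/(1 - p)) * (2*p - 1)^2"
    unfolding e1 e2 using q ph by (intro divide_right_mono) auto
  hence "V * (p^2 / (1 - p) - 1) \<le> V * ((1/p + 1/(1 - p)) * (2*p - 1)^2)"
    using V by (rule mult_left_mono)
  also have "\<dots> = (1/p + 1/(1 - p)) * ((2*p - 1)^2 * V)" by (simp add: mult_ac)
  also have "\<dots> \<le> (1/p + 1/(1 - p)) * W"
    using gap [OF ph] q ph by (intro mult_left_mono) auto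
  also have "\<dots> = 2 * (1/p + 1/(1 - p)) * W - (1/(1 - p))^2 * ((1 - p) * W) - (1/p)^2 * p * W"
  proof -
    have "(1/(1 - p))^2 * ((1 - p) * W) = (1/(1 - p)) * W" using q by (simp add: power2_eq_square)
    moreover have "(1/p)^2 * p * W = (1/p) * W" using ph by (simp add: power2_eq_square)
    ultimately show ?thesis by (simp add: algebra_simps)
  qed
  also have "\<dots> \<le> P" by (rule test)
  finally show ?thesis .
qed

lemma purity_trace_ge_variance:
  fixes \<sigma> H :: "complex^'n^'n" and \<Phi> :: "complex^'n" and p :: real
  assumes hs: "hermitian \<sigma>" and ps: "\<forall>x. Re (braket x (\<sigma> *v x)) \<ge> 0" and tr: "mtrace \<sigma> = 1"
    and hH: "hermitian H" and n\<Phi>: "braket \<Phi> \<Phi> = 1"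
    and eig: "\<sigma> *v \<Phi> = of_real p *s \<Phi>" and p1: "p < 1"
    and sp: "supp (H ** \<sigma> ** H) \<subseteq> supp \<sigma>"
  shows "variance H \<Phi> * (p\<^sup>2 / (1 - p) - 1)
     \<le> Re (mtrace (H ** \<sigma> ** \<sigma> ** H ** pinv \<sigma>) - mtrace (\<sigma> ** H ** H))"
proof -
  define v where "v = deviation H \<Phi>"
  define w where "w = (H ** \<sigma> - \<sigma> ** H) *v \<Phi>"
  have "braket \<Phi> (\<sigma> *v \<Phi>) = of_real p" by (simp add: eig braket_smult_right n\<Phi>)
  hence p0: "0 \<le> p" using ps by (metis Re_complex_of_real)
  have w_eq: "w = of_real p *s v - \<sigma> *v v"
    unfolding w_def v_def deviation_def
    by (simp add: matrix_vector_mult_diff_rdistrib matrix_vector_mul_assoc [symmetric] eig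
        matrix_vector_smult matrix_vector_mult_diff_distrib vec_eq_iff algebra_simps)
  have v\<Phi>: "braket \<Phi> v = 0" unfolding v_def by (rule braket_deviation [OF n\<Phi>])
  have "braket \<Phi> (\<sigma> *v v) = of_real p * braket \<Phi> v"
    using hs by (simp add: braket_adjoint hermitian_def eig braket_smult_left)
  hence w\<Phi>: "braket \<Phi> w = 0"
    unfolding w_eq by (simp add: braket_diff_right braket_smult_right v\<Phi>)
  have "2 * (a + b) * Re (braket w w) - b^2 * ((1 - p) * Re (braket w w)) - a^2 * p * Re (braket w w)
      \<le> Re (mtrace (H ** \<sigma> ** \<sigma> ** H ** pinv \<sigma>) - mtrace (\<sigma> ** H ** H))" for a b
    using purity_trace_ge_test_matrix [OF hs ps hH sp n\<Phi> eig w_def [symmetric] w\<Phi>, of a b]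
      mult_left_mono [OF psd_form_orthogonal_eigenvector_le [OF hs ps tr n\<Phi> eig w\<Phi>], of "b^2"]
    by simp
  moreover have "(2*p - 1)^2 * Re (braket v v) \<le> Re (braket w w)" if "1/2 < p"
    unfolding w_eq using that
    by (intro braket_shift_ge psd_form_orthogonal_eigenvector_le [OF hs ps tr n\<Phi> eig v\<Phi>]) simp
  ultimately show ?thesis
    unfolding variance_eq_deviation [OF hH n\<Phi>] v_def [symmetric]
    by (intro purity_real_bound [OF p0 p1 braket_self_nonneg])
qed

theorem mainTheorem17:
  fixes \<sigma> H :: "complex^'n^'n" and \<Phi> :: "complex^'n" and pmax :: real
  assumes "density_operator \<sigma>"
    and "hermitian H"
    and "braket \<Phi> \<Phi> = 1"
    and "\<sigma> *v \<Phi> = of_real pmax *s \<Phi>"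
    and "\<forall>l v. v \<noteq> 0 \<and> \<sigma> *v v = l *s v \<longrightarrow> Re l \<le> pmax"
    and "pmax < 1"
  shows "purity_coh H \<sigma> \<ge> ereal (variance H \<Phi> * (pmax\<^sup>2 / (1 - pmax) - 1))"
proof (cases "supp (H ** \<sigma> ** H) \<subseteq> supp \<sigma>")
  case True
  have "hermitian \<sigma>" "\<forall>x. Re (braket x (\<sigma> *v x)) \<ge> 0" "mtrace \<sigma> = 1"
    using assms(1) unfolding density_operator_def positive_semidef_def by auto
  from purity_trace_ge_variance [OF this assms(2-4,6) True]
  show ?thesis unfolding purity_coh_def using True by simp
next
  case False
  thus ?thesis unfolding purity_coh_def by simp
qed

end
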